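(* Let $p\in\mathcal P$. If $\mu(p)\ge\mu_a$, then $\Gamma_{\mu(p)}(p)$ is acyclic. In particular, if $n\in\{2,3\}$, then $\Gamma_{\mu(p)}(p)$ is acyclic for every $p\in\mathcal P$.
   Context: Let $n,h\ge2$, $N=\{1,\dots,n\}$, $H=\{1,\dots,h\}$, $\mathcal P$ the set of $h$-tuples of linear orders on $N$; $x>_{p_i}y$ means $x\neq y$ and $p_i$ ranks $x$ above $y$; for an integer $\mu\in(h/2,h]$, $x>^p_\mu y$ means $|\{i: x>_{p_i}y\}|\ge\mu$; $D_\mu(p)=\{x\in N: \forall y,\ |\{i: y>_{p_i}x\}|<\mu\}$; $\mu(p)=\min\{\mu\in\mathbb N\cap(h/2,h]: D_\mu(p)\ne\varnothing\}$. The acyclicity threshold is $\mu_a=\min\{m\in\mathbb N\cap(h/2,h]: m>\frac{n-2}{n-1}h\}$. $\Gamma_\mu(p)$ is the directed graph $(N,\{(x,y): x>^p_\mu y\})$; it is acyclic if it contains no directed cycle on $l\ge2$ distinct vertices as a subgraph. *)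

theory Defs
  imports Complex_Main
begin

text \<open>A profile assigns to each voter
  i a linear order p i on N, written as a (reflexive) relation: (x,y) \<in> p i
  means that voter i ranks x at least as high as y.\<close>

definition profiles :: "nat \<Rightarrow> nat \<Rightarrow> (nat \<Rightarrow> nat rel) set" where
  "profiles n h = {p. \<forall>i\<in>{1..h}. linear_order_on {1..n} (p i)}"

definition pref :: "nat rel \<Rightarrow> nat \<Rightarrow> nat \<Rightarrow> bool" where
  "pref r x y \<longleftrightarrow> x \<noteq> y \<and> (x, y) \<in> r"

definition nprefs :: "nat \<Rightarrow> (nat \<Rightarrow> nat rel) \<Rightarrow> nat \<Rightarrow> nat \<Rightarrow> nat" where
  "nprefs h p x y = card {i \<in> {1..h}. pref (p i) x y}"

definition maj :: "nat \<Rightarrow> (nat \<Rightarrow> nat rel) \<Rightarrow> nat \<Rightarrow> nat \<Rightarrow> nat \<Rightarrow> bool" where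
  "maj h p mu x y \<longleftrightarrow> nprefs h p x y \<ge> mu"

definition Dmu :: "nat \<Rightarrow> nat \<Rightarrow> (nat \<Rightarrow> nat rel) \<Rightarrow> nat \<Rightarrow> nat set" where
  "Dmu n h p mu = {x \<in> {1..n}. \<forall>y\<in>{1..n}. nprefs h p y x < mu}"

definition mu_of :: "nat \<Rightarrow> nat \<Rightarrow> (nat \<Rightarrow> nat rel) \<Rightarrow> nat" where
  "mu_of n h p = (LEAST mu. real h / 2 < real mu \<and> mu \<le> h \<and> Dmu n h p mu \<noteq> {})"

definition mu_a :: "nat \<Rightarrow> nat \<Rightarrow> nat" where
  "mu_a n h = (LEAST m. real h / 2 < real m \<and> m \<le> h \<and>
                  real m > (real n - 2) / (real n - 1) * real h)"

definition Gamma :: "nat \<Rightarrow> nat \<Rightarrow> (nat \<Rightarrow> nat rel) \<Rightarrow> nat \<Rightarrow> nat rel" where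
  "Gamma n h p mu = {(x, y). x \<in> {1..n} \<and> y \<in> {1..n} \<and> maj h p mu x y}"

definition acyclic_graph :: "'a set \<Rightarrow> 'a rel \<Rightarrow> bool" where
  "acyclic_graph V E \<longleftrightarrow> \<not> (\<exists>xs. 2 \<le> length xs \<and> distinct xs \<and> set xs \<subseteq> V \<and>
       (\<forall>j < length xs - 1. (xs ! j, xs ! (j + 1)) \<in> E) \<and> (last xs, hd xs) \<in> E)"

end

theory Submission
  imports Defs
begin

text \<open>A cycle of length l in Gamma_mu(p) has l edges, each supported by at least mu voters,
  whereas no voter's linear order supports all l of them; counting supporters gives
  l * mu \<le> (l - 1) * h. An alternative of D_mu(p), which exists for mu = mu(p), has no
  predecessor in Gamma_mu(p) and hence lies on no cycle, so l \<le> n - 1. Together these give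
  (n - 1) * mu \<le> (n - 2) * h, contradicting mu \<ge> mu_a. For n \<le> 3 the threshold
  (n - 2) / (n - 1) * h is at most h / 2 < mu(p), so mu(p) \<ge> mu_a holds automatically.\<close>

definition closed_walk :: "'a rel \<Rightarrow> 'a list \<Rightarrow> bool" where
  "closed_walk E xs \<longleftrightarrow> (\<forall>j < length xs. (xs ! j, xs ! (Suc j mod length xs)) \<in> E)"

lemma not_acyclic_graph_imp_closed_walk:
  assumes "\<not> acyclic_graph V E"
  obtains xs where "2 \<le> length xs" "distinct xs" "set xs \<subseteq> V" "closed_walk E xs"
proof -
  obtain xs where l: "2 \<le> length xs" and "distinct xs" "set xs \<subseteq> V"
    and path: "\<forall>j < length xs - 1. (xs ! j, xs ! (j + 1)) \<in> E"
    and closing: "(last xs, hd xs) \<in> E"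
    using assms unfolding acyclic_graph_def by blast
  have "(xs ! j, xs ! (Suc j mod length xs)) \<in> E" if j: "j < length xs" for j
  proof (cases "Suc j = length xs")
    case True
    moreover have "xs \<noteq> []" using l by auto
    ultimately have "last xs = xs ! j" "hd xs = xs ! 0"
      by (simp_all add: last_conv_nth hd_conv_nth flip: True)
    then show ?thesis using closing True by simp
  next
    case False
    then show ?thesis using path j by simp
  qed
  then show thesis using that l \<open>distinct xs\<close> \<open>set xs \<subseteq> V\<close> by (simp add: closed_walk_def)
qed

lemma closed_walk_ex_predecessor:
  assumes "closed_walk E xs" "x \<in> set xs"
  shows "\<exists>y \<in> set xs. (y, x) \<in> E"
proof -
  obtain k where k: "k < length xs" "xs ! k = x" using assms(2) by (auto simp: in_set_conv_nth)
  define j where "j = (if k = 0 then length xs - 1 else k - 1)"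
  have "j < length xs" "Suc j mod length xs = k" using k by (auto simp: j_def)
  then show ?thesis using assms(1) k by (metis closed_walk_def nth_mem)
qed

lemma closed_walk_not_acyclic:
  assumes walk: "closed_walk E xs" and "xs \<noteq> []"
  shows "\<not> acyclic E"
proof -
  let ?l = "length xs"
  have edge: "(xs ! j, xs ! (Suc j mod ?l)) \<in> E" if "j < ?l" for j
    using walk that by (simp add: closed_walk_def)
  have "(xs ! 0, xs ! k) \<in> E\<^sup>*" if "k < ?l" for k
    using that
  proof (induction k)
    case (Suc k)
    then show ?case using edge[of k] by (simp add: rtrancl_into_rtrancl)
  qed simp
  then have "(xs ! 0, xs ! (?l - 1)) \<in> E\<^sup>*" using \<open>xs \<noteq> []\<close> by simp
  moreover have "(xs ! (?l - 1), xs ! 0) \<in> E" using edge[of "?l - 1"] \<open>xs \<noteq> []\<close> by simp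
  ultimately have "(xs ! 0, xs ! 0) \<in> E\<^sup>+" by (rule rtrancl_into_trancl1)
  then show ?thesis by (auto simp: acyclic_def)
qed

lemma partial_order_on_ex_undominated:
  assumes "partial_order_on A r" "finite A" "A \<noteq> {}"
  shows "\<exists>x \<in> A. \<forall>y \<in> A. (y, x) \<in> r \<longrightarrow> y = x"
proof -
  have "acyclic ((r - Id) \<inter> A \<times> A)"
    using partial_order_on_acyclic[OF assms(1)] by (rule acyclic_subset) blast
  then have wf: "wf ((r - Id) \<inter> A \<times> A)"
    using assms(2) by (intro finite_acyclic_wf) auto
  then have "\<exists>z \<in> A. \<forall>y. (y, z) \<in> (r - Id) \<inter> A \<times> A \<longrightarrow> y \<notin> A"
    using assms(3) unfolding wf_eq_minimal by blast
  then show ?thesis by blast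
qed

lemma double_counting_bound:
  fixes P :: "'i \<Rightarrow> 'j \<Rightarrow> bool"
  assumes "finite I" "finite J"
    and supported: "\<And>j. j \<in> J \<Longrightarrow> m \<le> card {i \<in> I. P i j}"
    and missed: "\<And>i. i \<in> I \<Longrightarrow> \<exists>j \<in> J. \<not> P i j"
  shows "card J * m \<le> (card J - 1) * card I"
proof -
  have card_eq: "card {x \<in> X. Q x} = (\<Sum>x\<in>X. if Q x then 1 else 0)"
    if "finite X" for X :: "'a set" and Q
    using that by (simp add: sum.If_cases Int_def)
  have "card J * m \<le> (\<Sum>j\<in>J. card {i \<in> I. P i j})"
    using sum_mono[OF supported] by simp
  also have "\<dots> = (\<Sum>j\<in>J. \<Sum>i\<in>I. if P i j then 1 else 0)"
    using assms(1) by (simp add: card_eq)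
  also have "\<dots> = (\<Sum>i\<in>I. \<Sum>j\<in>J. if P i j then 1 else 0)"
    by (rule sum.swap)
  also have "\<dots> = (\<Sum>i\<in>I. card {j \<in> J. P i j})"
    using assms(2) by (simp add: card_eq)
  also have "\<dots> \<le> (\<Sum>i\<in>I. card J - 1)"
  proof (rule sum_mono)
    fix i assume "i \<in> I"
    then obtain j where "j \<in> J" "\<not> P i j" using missed by blast
    then have "{j \<in> J. P i j} \<subseteq> J - {j}" by blast
    then show "card {j \<in> J. P i j} \<le> card J - 1"
      using card_mono[OF _ \<open>{j \<in> J. P i j} \<subseteq> J - {j}\<close>] assms(2) \<open>j \<in> J\<close> by simp
  qed
  finally show ?thesis by (simp add: mult.commute)
qed

lemma pref_iff_mem_diff_Id: "pref r x y \<longleftrightarrow> (x, y) \<in> r - Id"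
  by (auto simp: pref_def)

lemma closed_walk_Gamma_bound:
  assumes "p \<in> profiles n h" "closed_walk (Gamma n h p mu) xs" "xs \<noteq> []"
  shows "length xs * mu \<le> (length xs - 1) * h"
proof -
  let ?l = "length xs"
  define P where "P i j \<longleftrightarrow> pref (p i) (xs ! j) (xs ! (Suc j mod ?l))" for i j
  have "card {..<?l} * mu \<le> (card {..<?l} - 1) * card {1..h}"
  proof (rule double_counting_bound)
    fix j assume "j \<in> {..<?l}"
    then have "(xs ! j, xs ! (Suc j mod ?l)) \<in> Gamma n h p mu"
      using assms(2) by (simp add: closed_walk_def)
    then show "mu \<le> card {i \<in> {1..h}. P i j}"
      by (simp add: Gamma_def maj_def nprefs_def P_def)
  next
    fix i assume "i \<in> {1..h}"
    then have "linear_order_on {1..n} (p i)" using assms(1) by (simp add: profiles_def)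
    then have "acyclic (p i - Id)" by (rule linear_order_on_acyclic)
    then have "\<not> closed_walk (p i - Id) xs" using closed_walk_not_acyclic assms(3) by blast
    then show "\<exists>j \<in> {..<?l}. \<not> P i j"
      by (auto simp: closed_walk_def P_def pref_iff_mem_diff_Id)
  qed auto
  then show ?thesis by simp
qed

lemma Dmu_not_on_closed_walk:
  assumes "x \<in> Dmu n h p mu" "closed_walk (Gamma n h p mu) xs"
  shows "x \<notin> set xs"
proof
  assume "x \<in> set xs"
  then obtain y where "(y, x) \<in> Gamma n h p mu"
    using closed_walk_ex_predecessor[OF assms(2)] by blast
  then have "y \<in> {1..n}" "mu \<le> nprefs h p y x" by (simp_all add: Gamma_def maj_def)
  then show False using assms(1) unfolding Dmu_def by fastforce
qed

lemma cycle_count_arith: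
  fixes l n mu h :: nat
  assumes "1 \<le> l" "l \<le> n - 1" "mu \<le> h" "l * mu \<le> (l - 1) * h"
  shows "(n - 1) * mu \<le> (n - 2) * h"
proof -
  have "l * mu \<le> l * h - h" using assms(4) by (simp add: diff_mult_distrib)
  moreover have "h \<le> l * h" using assms(1) by simp
  ultimately have "h \<le> l * h - l * mu" by arith
  then have "h \<le> l * (h - mu)" by (simp add: diff_mult_distrib2)
  also have "\<dots> \<le> (n - 1) * (h - mu)" using assms(2) by simp
  finally have "h \<le> (n - 1) * h - (n - 1) * mu" by (simp add: diff_mult_distrib2)
  moreover have "(n - 1) * mu \<le> (n - 1) * h" using assms(3) by (rule mult_le_mono2)
  moreover have "(n - 2) * h = (n - 1) * h - h" by (cases n) (simp_all add: diff_mult_distrib)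
  ultimately show ?thesis by linarith
qed

lemma acyclic_graph_Gamma:
  assumes "p \<in> profiles n h" "Dmu n h p mu \<noteq> {}" "mu \<le> h" "(n - 2) * h < (n - 1) * mu"
  shows "acyclic_graph {1..n} (Gamma n h p mu)"
proof (rule ccontr)
  assume "\<not> acyclic_graph {1..n} (Gamma n h p mu)"
  then obtain xs where l: "2 \<le> length xs" and "distinct xs" "set xs \<subseteq> {1..n}"
    and walk: "closed_walk (Gamma n h p mu) xs"
    by (rule not_acyclic_graph_imp_closed_walk)
  obtain x where x: "x \<in> Dmu n h p mu" using assms(2) by blast
  have "set xs \<subseteq> {1..n} - {x}"
    using Dmu_not_on_closed_walk[OF x walk] \<open>set xs \<subseteq> {1..n}\<close> by blast
  then have "card (set xs) \<le> card ({1..n} - {x})" by (intro card_mono) auto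
  then have "length xs \<le> n - 1" using x \<open>distinct xs\<close> by (simp add: distinct_card Dmu_def)
  moreover have "xs \<noteq> []" using l by auto
  then have "length xs * mu \<le> (length xs - 1) * h"
    by (rule closed_walk_Gamma_bound[OF assms(1) walk])
  ultimately have "(n - 1) * mu \<le> (n - 2) * h"
    using l assms(3) by (intro cycle_count_arith) auto
  then show False using assms(4) by simp
qed

lemma Dmu_unanimity_nonempty:
  assumes "p \<in> profiles n h" "1 \<le> n" "1 \<le> h"
  shows "Dmu n h p h \<noteq> {}"
proof -
  have order: "partial_order_on {1..n} (p 1)"
    using assms(1,3) by (simp add: profiles_def linear_order_on_def)
  have "{1..n} \<noteq> {}" using assms(2) by simp
  then obtain x where x: "x \<in> {1..n}" and top: "\<And>y. y \<in> {1..n} \<Longrightarrow> (y, x) \<in> p 1 \<Longrightarrow> y = x"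
    using partial_order_on_ex_undominated[OF order finite_atLeastAtMost] by blast
  have "nprefs h p y x < h" if "y \<in> {1..n}" for y
  proof -
    have "{i \<in> {1..h}. pref (p i) y x} \<subseteq> {1..h} - {1}"
      using top[OF that] by (auto simp: pref_def)
    then have "nprefs h p y x \<le> card ({1..h} - {1})"
      unfolding nprefs_def by (intro card_mono) auto
    then show ?thesis using assms(3) by simp
  qed
  then show ?thesis using x by (auto simp: Dmu_def)
qed

lemma mu_of_bounds:
  assumes "p \<in> profiles n h" "1 \<le> n" "1 \<le> h"
  shows "real h / 2 < real (mu_of n h p)" "mu_of n h p \<le> h" "Dmu n h p (mu_of n h p) \<noteq> {}"
proof -
  have "real h / 2 < real h \<and> h \<le> h \<and> Dmu n h p h \<noteq> {}"
    using Dmu_unanimity_nonempty[OF assms] assms(3) by simp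
  from LeastI[of "\<lambda>mu. real h / 2 < real mu \<and> mu \<le> h \<and> Dmu n h p mu \<noteq> {}", OF this] show
    "real h / 2 < real (mu_of n h p)" "mu_of n h p \<le> h" "Dmu n h p (mu_of n h p) \<noteq> {}"
    unfolding mu_of_def by blast+
qed

lemma mu_a_gt:
  assumes "2 \<le> n" "1 \<le> h"
  shows "(n - 2) * h < (n - 1) * mu_a n h"
proof -
  have n1: "real n - 1 > 0" using assms by simp
  then have "(real n - 2) / (real n - 1) * real h < real h"
    using assms by (simp add: field_simps)
  then have "real h / 2 < real h \<and> h \<le> h \<and> real h > (real n - 2) / (real n - 1) * real h"
    using assms by auto
  from LeastI[of "\<lambda>m. real h / 2 < real m \<and> m \<le> h \<and> real m > (real n - 2) / (real n - 1) * real h", OF this]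
  have "(real n - 2) / (real n - 1) * real h < real (mu_a n h)" unfolding mu_a_def by blast
  then have "(real n - 2) * real h < (real n - 1) * real (mu_a n h)"
    using n1 by (simp add: field_simps)
  then have "real ((n - 2) * h) < real ((n - 1) * mu_a n h)" using assms by (simp add: of_nat_diff)
  then show ?thesis by (simp only: of_nat_less_iff)
qed

lemma mu_a_le_if_small_n:
  assumes "n \<in> {2, 3}" "real h / 2 < real mu" "mu \<le> h"
  shows "mu_a n h \<le> mu"
proof -
  have "(real n - 2) / (real n - 1) * real h \<le> real h / 2" using assms(1) by auto
  then have "(real n - 2) / (real n - 1) * real h < real mu" using assms(2) by linarith
  then show ?thesis unfolding mu_a_def using assms(2,3) by (intro Least_le) blast
qed

theorem corollary7:
  fixes n h :: nat
  assumes "n \<ge> 2" and "h \<ge> 2"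
  shows "(\<forall>p \<in> profiles n h. mu_of n h p \<ge> mu_a n h \<longrightarrow>
            acyclic_graph {1..n} (Gamma n h p (mu_of n h p)))
       \<and> (n \<in> {2, 3} \<longrightarrow>
            (\<forall>p \<in> profiles n h. acyclic_graph {1..n} (Gamma n h p (mu_of n h p))))"
proof -
  have n: "1 \<le> n" and h: "1 \<le> h" using assms by simp_all
  have main: "acyclic_graph {1..n} (Gamma n h p (mu_of n h p))"
    if p: "p \<in> profiles n h" and "mu_a n h \<le> mu_of n h p" for p
  proof (rule acyclic_graph_Gamma[OF p mu_of_bounds(3,2)[OF p n h]])
    have "(n - 2) * h < (n - 1) * mu_a n h" using mu_a_gt assms by simp
    also have "\<dots> \<le> (n - 1) * mu_of n h p" using \<open>mu_a n h \<le> mu_of n h p\<close> by simp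
    finally show "(n - 2) * h < (n - 1) * mu_of n h p" .
  qed
  moreover have "mu_a n h \<le> mu_of n h p" if "p \<in> profiles n h" "n \<in> {2, 3}" for p
    using that(2) mu_of_bounds(1,2)[OF that(1) n h] by (rule mu_a_le_if_small_n)
  ultimately show ?thesis by blast
qed

end
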